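(* Let $\alpha_1,\alpha_2$ be the maps defined on gapset filtrations $F=(F_0,F_1,F_2)$ of depth at most $3$ (with $F_0=[1,m-1]$, $m$ the multiplicity) by $\alpha_1(F)=(F_0\sqcup\{m\},F_1,F_2)$ and $\alpha_2(F)=(F_0\sqcup\{m\},F_1\sqcup\{m\},F_2)$. Then the images of $\alpha_1$ and $\alpha_2$ are disjoint: there are no gapset filtrations $F,F'$ of depth at most $3$ with $\alpha_1(F)=\alpha_2(F')$.
   Context: A gapset is a finite set $G \subset \mathbb{N}_+$ such that for all $z \in G$, whenever $z=x+y$ with $x,y\in\mathbb{N}_+$, we have $x\in G$ or $y\in G$. Its multiplicity is the least $m\ge1$ with $m\notin G$, and its depth is $\lceil c/m\rceil$ where $c=\max G+1$ ($c=0$ if $G=\emptyset$). For $m\ge1$, an $m$-filtration is a sequence $(F_0,\dots,F_t)$ with $F_0=[1,m-1]\supseteq F_1\supseteq\dots\supseteq F_t$; it is a gapset filtration if $\bigcup_i(im+F_i)$ is a gapset, and its multiplicity and depth are those of that gapset. Gapset filtrations of depth at most $3$ are written as triples $(F_0,F_1,F_2)$, padding with empty sets if necessary. *)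

theory Defs
  imports Main
begin

definition gapset :: "nat set \<Rightarrow> bool" where
  "gapset G \<longleftrightarrow> finite G \<and> 0 \<notin> G \<and>
     (\<forall>z\<in>G. \<forall>x y. 0 < x \<and> 0 < y \<and> z = x + y \<longrightarrow> x \<in> G \<or> y \<in> G)"

definition gapset_mult :: "nat set \<Rightarrow> nat" where
  "gapset_mult G = (LEAST m. 1 \<le> m \<and> m \<notin> G)"

(* c = max G + 1 (c = 0 if G empty); depth = ceil(c/m) *)
definition gapset_depth :: "nat set \<Rightarrow> nat" where
  "gapset_depth G = (let c = (if G = {} then 0 else Max G + 1); m = gapset_mult G
                     in (c + m - 1) div m)"

type_synonym filt3 = "nat set \<times> nat set \<times> nat set"

definition filt_set :: "nat \<Rightarrow> filt3 \<Rightarrow> nat set" where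
  "filt_set m F = (case F of (F0, F1, F2) \<Rightarrow>
      F0 \<union> (\<lambda>x. m + x) ` F1 \<union> (\<lambda>x. 2 * m + x) ` F2)"

definition gapset_filtration3 :: "nat \<Rightarrow> filt3 \<Rightarrow> bool" where
  "gapset_filtration3 m F = (case F of (F0, F1, F2) \<Rightarrow>
      1 \<le> m \<and> F0 = {1..m-1} \<and> F1 \<subseteq> F0 \<and> F2 \<subseteq> F1 \<and>
      gapset (filt_set m F) \<and> gapset_depth (filt_set m F) \<le> 3)"

definition filt_mult :: "nat \<Rightarrow> filt3 \<Rightarrow> nat" where
  "filt_mult m F = gapset_mult (filt_set m F)"

definition alpha1 :: "nat \<Rightarrow> filt3 \<Rightarrow> filt3" where
  "alpha1 m F = (case F of (F0, F1, F2) \<Rightarrow> (F0 \<union> {filt_mult m F}, F1, F2))"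

definition alpha2 :: "nat \<Rightarrow> filt3 \<Rightarrow> filt3" where
  "alpha2 m F = (case F of (F0, F1, F2) \<Rightarrow>
      (F0 \<union> {filt_mult m F}, F1 \<union> {filt_mult m F}, F2))"

end

theory Submission
  imports Defs
begin

text \<open>With \<open>F\<^sub>0 = [1, m - 1]\<close> the multiplicity of the filtration is \<open>m\<close>, so both
  \<open>\<alpha>\<^sub>1\<close> and \<open>\<alpha>\<^sub>2\<close> replace \<open>F\<^sub>0\<close> by \<open>[1, m]\<close>. Equal first components then force equal
  multiplicities \<open>m = m'\<close>, and equal second components give \<open>m \<in> F\<^sub>1 \<subseteq> [1, m - 1]\<close>.
  Only the shape of the filtrations matters.\<close>

lemma filt_mult_interval:
  assumes "0 < m" "0 \<notin> F1"
  shows "filt_mult m ({1..m-1}, F1, F2) = m"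
  unfolding filt_mult_def gapset_mult_def
proof (rule Least_equality)
  show "1 \<le> m \<and> m \<notin> filt_set m ({1..m-1}, F1, F2)"
    using assms by (auto simp: filt_set_def)
next
  fix y assume "1 \<le> y \<and> y \<notin> filt_set m ({1..m-1}, F1, F2)"
  then show "m \<le> y" by (auto simp: filt_set_def)
qed

lemma gapset_filtration3D:
  assumes "gapset_filtration3 m (F0, F1, F2)"
  shows "0 < m" "F0 = {1..m-1}" "F1 \<subseteq> {1..m-1}"
  using assms by (auto simp: gapset_filtration3_def)

lemma filt_mult_filtration:
  assumes "gapset_filtration3 m (F0, F1, F2)"
  shows "filt_mult m (F0, F1, F2) = m"
proof -
  have "0 \<notin> F1" using gapset_filtration3D(3)[OF assms] by auto
  then show ?thesis
    using filt_mult_interval gapset_filtration3D(1,2)[OF assms] by simp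
qed

lemma insert_mult_filtration:
  assumes "gapset_filtration3 m (F0, F1, F2)"
  shows "insert m F0 = {1..m}"
  using gapset_filtration3D(1,2)[OF assms] by auto

lemma alpha1_filtration:
  assumes "gapset_filtration3 m (F0, F1, F2)"
  shows "alpha1 m (F0, F1, F2) = ({1..m}, F1, F2)"
  using assms by (simp add: alpha1_def filt_mult_filtration insert_mult_filtration)

lemma alpha2_filtration:
  assumes "gapset_filtration3 m (F0, F1, F2)"
  shows "alpha2 m (F0, F1, F2) = ({1..m}, F1 \<union> {m}, F2)"
  using assms by (simp add: alpha2_def filt_mult_filtration insert_mult_filtration)

theorem mainTheorem12:
  shows "\<not> (\<exists>m F m' F'. gapset_filtration3 m F \<and> gapset_filtration3 m' F' \<and>
              alpha1 m F = alpha2 m' F')"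
proof
  assume "\<exists>m F m' F'. gapset_filtration3 m F \<and> gapset_filtration3 m' F' \<and>
              alpha1 m F = alpha2 m' F'"
  then obtain m F0 F1 F2 m' G0 G1 G2 where
    F: "gapset_filtration3 m (F0, F1, F2)" and G: "gapset_filtration3 m' (G0, G1, G2)" and
    eq: "alpha1 m (F0, F1, F2) = alpha2 m' (G0, G1, G2)"
    by (metis prod_cases3)
  from eq have "{1..m} = {1..m'}" and F1_eq: "F1 = G1 \<union> {m'}"
    by (simp_all add: alpha1_filtration[OF F] alpha2_filtration[OF G])
  then have "m = m'"
    using gapset_filtration3D(1)[OF F] gapset_filtration3D(1)[OF G]
    by simp
  with F1_eq have "m \<in> F1" by simp
  then show False using gapset_filtration3D(3)[OF F] by fastforce
qed

end
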